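(* Let $G=(V,E,L)$ be a graph with loops, let $\{i,i\}\in L^+$ and let $M_1\subset M_2\subseteq N(i)$ with $i\in M_1$. For $k=1,2$ let $\Sigma(M_k)$ denote the system $$z_{ii}\ \ge\sum_{J\subseteq M_k:\, i\in J}\frac{\big(\ell_{d_k}(J,M_k\setminus J)\big)^2}{\ell_{d_k-1}(J\setminus\{i\},M_k\setminus J)},\qquad \ell_{d_k}(J,M_k\setminus J)\ge 0\quad\forall J\subseteq M_k,$$ with $d_k:=|M_k|$, in the variables $z_{ii}$ and $z_S$, $S\subseteq M_k$, $S\neq\emptyset$. Then the system $\Sigma(M_1)$ is implied by $\Sigma(M_2)$: every assignment of the variables $z_{ii}$, $z_S$ ($S\subseteq M_2$) satisfying $\Sigma(M_2)$ satisfies $\Sigma(M_1)$ when restricted to the variables $z_{ii}$, $z_S$ ($S\subseteq M_1$).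
   Context: A graph with loops is $G=(V,E,L)$: $V$ finite node set, $E$ a set of unordered pairs of distinct nodes, $L$ a set of loops $\{i,i\}$ partitioned as $L=L^-\cup L^+$ (minus/plus loops). For a plus loop $\{i,i\}$, $N(i):=\{j\in V:\{i,j\}\in E\cup L\}$ (so $i\in N(i)$). Variables: $z_\emptyset:=1$, $z_{\{k\}}:=z_k$, and for $|S|\ge2$ a variable $z_S$ (equal to the edge variable when $S\in E$, auxiliary otherwise); the loop variable $z_{ii}$ is separate. For disjoint $J_1,J_2$ with $|J_1\cup J_2|=d$, $\ell_d(J_1,J_2):=\sum_{t\subseteq J_2}(-1)^{|t|}z_{J_1\cup t}$. Each $u^2/v$ denotes the closed perspective: $u^2/v$ if $v>0$, $0$ if $u=v=0$, $+\infty$ if $u\neq0,v=0$. *)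

theory Defs
  imports "HOL-Analysis.Analysis"
begin

text \<open>A graph with loops (V,E,L), L = Lminus \<union> Lplus. A loop {i,i} is represented
  by the node i; so Lminus, Lplus are disjoint sets of nodes.\<close>
definition graph_with_loops :: "'a set \<Rightarrow> 'a set set \<Rightarrow> 'a set \<Rightarrow> 'a set \<Rightarrow> bool" where
  "graph_with_loops V E Lminus Lplus \<longleftrightarrow>
     finite V \<and> (\<forall>e\<in>E. \<exists>a b. a \<in> V \<and> b \<in> V \<and> a \<noteq> b \<and> e = {a, b})
     \<and> Lminus \<subseteq> V \<and> Lplus \<subseteq> V \<and> Lminus \<inter> Lplus = {}"

definition nbhd :: "'a set \<Rightarrow> 'a set set \<Rightarrow> 'a set \<Rightarrow> 'a set \<Rightarrow> 'a \<Rightarrow> 'a set" where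
  "nbhd V E Lminus Lplus i = {j \<in> V. {i, j} \<in> E \<or> (j = i \<and> i \<in> Lminus \<union> Lplus)}"

text \<open>ell z J1 J2 = sum over t \<subseteq> J2 of (-1)^|t| z_(J1 \<union> t); the index d = |J1 \<union> J2|
  is only a label and therefore not an argument.\<close>
definition ell :: "('a set \<Rightarrow> real) \<Rightarrow> 'a set \<Rightarrow> 'a set \<Rightarrow> real" where
  "ell z J1 J2 = (\<Sum>t\<in>Pow J2. (-1) ^ card t * z (J1 \<union> t))"

text \<open>Closed perspective u^2/v (value +\<infinity> also for v < 0, the usual convention;
  this case cannot occur under the constraints of the system).\<close>
definition persp :: "real \<Rightarrow> real \<Rightarrow> ereal" where
  "persp u v = (if v > 0 then ereal (u^2 / v) else if u = 0 \<and> v = 0 then 0 else \<infinity>)"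

definition Sigma_sys :: "('a set \<Rightarrow> real) \<Rightarrow> real \<Rightarrow> 'a \<Rightarrow> 'a set \<Rightarrow> bool" where
  "Sigma_sys z zii i M \<longleftrightarrow>
     ereal zii \<ge> (\<Sum>J\<in>{J. J \<subseteq> M \<and> i \<in> J}. persp (ell z J (M - J)) (ell z (J - {i}) (M - J)))
     \<and> (\<forall>J. J \<subseteq> M \<longrightarrow> ell z J (M - J) \<ge> 0)"

end

theory Submission
  imports Defs
begin

text \<open>Restricting to a subset M1 of M2 amounts to summing the forms of M2 over the missing
  elements: for J \<subseteq> M1, each form ell(J', M1 - J) is the sum of ell(J' \<union> K, M2 - (J \<union> K))
  over K \<subseteq> M2 - M1. Hence the nonnegativity constraints pass from M2 to M1, and since the
  closed perspective (u, v) \<mapsto> u^2/v is subadditive, each term of the M1 inequality is bounded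
  by the sum of the M2 terms indexed by the sets J \<union> K. These sets enumerate every J' \<subseteq> M2
  containing i exactly once, so the M1 sum is bounded by the M2 sum, hence by z_ii.\<close>

lemma sum_Pow_insert:
  assumes "x \<notin> A" "finite A"
  shows "(\<Sum>t\<in>Pow (insert x A). f t) = (\<Sum>t\<in>Pow A. f t) + (\<Sum>t\<in>Pow A. f (insert x t))"
proof -
  have "inj_on (insert x) (Pow A)"
    using assms(1) by (intro inj_onI) (meson PowD insert_ident subset_iff)
  moreover have "Pow A \<inter> insert x ` Pow A = {}"
    using assms(1) by blast
  ultimately show ?thesis
    using assms(2) by (simp add: Pow_insert sum.union_disjoint sum.reindex)
qed

lemma sum_Pow_disjoint_union:
  assumes "finite A" "finite C" "A \<inter> C = {}"
  shows "(\<Sum>J\<in>{J. J \<subseteq> A \<and> P J}. \<Sum>K\<in>Pow C. g (J \<union> K))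
       = (\<Sum>J\<in>{J. J \<subseteq> A \<union> C \<and> P (J \<inter> A)}. g J)"
proof -
  have split: "(J \<union> K) \<inter> A = J" "(J \<union> K) - A = K" if "J \<subseteq> A" "K \<subseteq> C" for J K
    using that assms(3) by auto
  have "(\<Sum>J\<in>{J. J \<subseteq> A \<and> P J}. \<Sum>K\<in>Pow C. g (J \<union> K))
      = (\<Sum>(J, K)\<in>{J. J \<subseteq> A \<and> P J} \<times> Pow C. g (J \<union> K))"
    using assms(1,2) by (intro sum.cartesian_product)
  also have "\<dots> = (\<Sum>J\<in>{J. J \<subseteq> A \<union> C \<and> P (J \<inter> A)}. g J)"
    by (rule sum.reindex_bij_witness[where i = "\<lambda>J. (J \<inter> A, J - A)" and j = "\<lambda>(J, K). J \<union> K"])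
       (use split in auto)
  finally show ?thesis .
qed

lemma ell_insert:
  assumes "c \<notin> B" "finite B"
  shows "ell z A (insert c B) = ell z A B - ell z (insert c A) B"
proof -
  have "(-1) ^ card (insert c t) * z (A \<union> insert c t) = - ((-1) ^ card t * z (insert c A \<union> t))"
    if "t \<in> Pow B" for t
  proof -
    have "c \<notin> t" "finite t"
      using that assms finite_subset[of t B] by auto
    then show ?thesis by simp
  qed
  then show ?thesis
    using assms unfolding ell_def by (simp add: sum_Pow_insert sum_negf)
qed

lemma ell_split:
  assumes "finite C" "finite B" "C \<inter> B = {}"
  shows "ell z A B = (\<Sum>K\<in>Pow C. ell z (A \<union> K) (B \<union> (C - K)))"
  using assms
proof (induction C arbitrary: A B rule: finite_induct)
  case empty
  then show ?case by simp
next
  case (insert c C)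
  have "ell z (A \<union> K) (B \<union> (insert c C - K)) + ell z (A \<union> insert c K) (B \<union> (insert c C - insert c K))
      = ell z (A \<union> K) (B \<union> (C - K))" if "K \<in> Pow C" for K
  proof -
    have "B \<union> (insert c C - K) = insert c (B \<union> (C - K))"
      and "B \<union> (insert c C - insert c K) = B \<union> (C - K)"
      using that insert.hyps(2) by auto
    moreover have "c \<notin> B \<union> (C - K)" "finite (B \<union> (C - K))"
      using insert by auto
    ultimately show ?thesis
      by (simp add: ell_insert)
  qed
  then have "(\<Sum>K\<in>Pow (insert c C). ell z (A \<union> K) (B \<union> (insert c C - K)))
      = (\<Sum>K\<in>Pow C. ell z (A \<union> K) (B \<union> (C - K)))"
    using insert.hyps by (simp add: sum_Pow_insert sum.distrib[symmetric])
  also have "\<dots> = ell z A B"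
    using insert by (intro insert.IH[symmetric]) auto
  finally show ?case by simp
qed

lemma ell_restrict:
  assumes "finite M2" "M1 \<subseteq> M2" "J \<subseteq> M1"
  shows "ell z A (M1 - J) = (\<Sum>K\<in>Pow (M2 - M1). ell z (A \<union> K) (M2 - (J \<union> K)))"
proof -
  have "ell z A (M1 - J) = (\<Sum>K\<in>Pow (M2 - M1). ell z (A \<union> K) ((M1 - J) \<union> (M2 - M1 - K)))"
    using assms(1,2) finite_subset by (intro ell_split) auto
  also have "\<dots> = (\<Sum>K\<in>Pow (M2 - M1). ell z (A \<union> K) (M2 - (J \<union> K)))"
    using assms(2,3) by (intro sum.cong refl arg_cong[where f = "ell z _"]) auto
  finally show ?thesis .
qed

lemma persp_nonneg: "persp u v \<ge> 0"
  unfolding persp_def by auto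

lemma square_div_add_le:
  fixes a b c d :: real
  assumes "c > 0" "d > 0"
  shows "(a + b)\<^sup>2 / (c + d) \<le> a\<^sup>2 / c + b\<^sup>2 / d"
proof -
  have "(a + b)\<^sup>2 * (c * d) \<le> (a\<^sup>2 * d + b\<^sup>2 * c) * (c + d)"
    using zero_le_power2[of "a * d - b * c"] by (simp add: power2_eq_square algebra_simps)
  then show ?thesis
    using assms by (simp add: field_simps)
qed

lemma persp_add: "persp (a + b) (c + d) \<le> persp a c + persp b d"
proof (cases "persp a c = \<infinity> \<or> persp b d = \<infinity>")
  case True
  then show ?thesis
    using persp_nonneg[of a c] persp_nonneg[of b d] by auto
next
  case False
  then have "c > 0 \<or> a = 0 \<and> c = 0" "d > 0 \<or> b = 0 \<and> d = 0"
    unfolding persp_def by (auto split: if_splits)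
  then show ?thesis
    using square_div_add_le[of c d a b] unfolding persp_def by auto
qed

lemma persp_sum:
  assumes "finite S"
  shows "persp (\<Sum>k\<in>S. u k) (\<Sum>k\<in>S. v k) \<le> (\<Sum>k\<in>S. persp (u k) (v k))"
  using assms
proof (induction S rule: finite_induct)
  case empty
  then show ?case by (simp add: persp_def)
next
  case (insert x F)
  then have "persp (\<Sum>k\<in>insert x F. u k) (\<Sum>k\<in>insert x F. v k)
      \<le> persp (u x) (v x) + persp (\<Sum>k\<in>F. u k) (\<Sum>k\<in>F. v k)"
    using persp_add by simp
  also have "\<dots> \<le> persp (u x) (v x) + (\<Sum>k\<in>F. persp (u k) (v k))"
    using insert.IH by (rule add_left_mono)
  finally show ?case
    using insert.hyps by simp
qed

lemma ell_restrict_nonneg: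
  assumes "finite M2" "M1 \<subseteq> M2" "J \<subseteq> M1"
    and "\<forall>J'. J' \<subseteq> M2 \<longrightarrow> ell z J' (M2 - J') \<ge> 0"
  shows "ell z J (M1 - J) \<ge> 0"
  unfolding ell_restrict[OF assms(1-3)]
  using assms(2,3) by (intro sum_nonneg assms(4)[rule_format]) auto

lemma persp_ell_restrict_le:
  assumes "finite M2" "M1 \<subseteq> M2" "J \<subseteq> M1" "i \<in> J"
  shows "persp (ell z J (M1 - J)) (ell z (J - {i}) (M1 - J))
    \<le> (\<Sum>K\<in>Pow (M2 - M1). persp (ell z (J \<union> K) (M2 - (J \<union> K))) (ell z (J \<union> K - {i}) (M2 - (J \<union> K))))"
proof -
  have "J - {i} \<union> K = J \<union> K - {i}" if "K \<in> Pow (M2 - M1)" for K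
    using that assms(3,4) by auto
  then have "ell z (J - {i}) (M1 - J) = (\<Sum>K\<in>Pow (M2 - M1). ell z (J \<union> K - {i}) (M2 - (J \<union> K)))"
    unfolding ell_restrict[OF assms(1-3)] by simp
  moreover have "finite (Pow (M2 - M1))"
    using assms(1) by simp
  ultimately show ?thesis
    unfolding ell_restrict[OF assms(1-3), of z J] by (simp add: persp_sum)
qed

lemma Sigma_sys_subset:
  assumes "finite M2" "M1 \<subseteq> M2" "i \<in> M1" "Sigma_sys z zii i M2"
  shows "Sigma_sys z zii i M1"
proof -
  define g where "g J = persp (ell z J (M2 - J)) (ell z (J - {i}) (M2 - J))" for J
  have bound: "(\<Sum>J\<in>{J. J \<subseteq> M2 \<and> i \<in> J}. g J) \<le> ereal zii"
    and nonneg: "\<forall>J. J \<subseteq> M2 \<longrightarrow> ell z J (M2 - J) \<ge> 0"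
    using assms(4) unfolding Sigma_sys_def g_def by auto
  have "finite M1" "M1 \<union> (M2 - M1) = M2" "M1 \<inter> (M2 - M1) = {}"
    using finite_subset[OF assms(2,1)] assms(2) by auto
  moreover have "i \<in> J \<inter> M1 \<longleftrightarrow> i \<in> J" for J
    using assms(3) by blast
  ultimately have regroup: "(\<Sum>J\<in>{J. J \<subseteq> M1 \<and> i \<in> J}. \<Sum>K\<in>Pow (M2 - M1). g (J \<union> K))
      = (\<Sum>J\<in>{J. J \<subseteq> M2 \<and> i \<in> J}. g J)"
    using sum_Pow_disjoint_union[where A = M1 and C = "M2 - M1" and P = "\<lambda>J. i \<in> J" and g = g] assms(1)
    by simp
  have "(\<Sum>J\<in>{J. J \<subseteq> M1 \<and> i \<in> J}. persp (ell z J (M1 - J)) (ell z (J - {i}) (M1 - J)))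
      \<le> (\<Sum>J\<in>{J. J \<subseteq> M1 \<and> i \<in> J}. \<Sum>K\<in>Pow (M2 - M1). g (J \<union> K))"
    unfolding g_def using assms(1,2) by (intro sum_mono persp_ell_restrict_le) auto
  also have "\<dots> \<le> ereal zii"
    using regroup bound by simp
  finally have "(\<Sum>J\<in>{J. J \<subseteq> M1 \<and> i \<in> J}. persp (ell z J (M1 - J)) (ell z (J - {i}) (M1 - J)))
      \<le> ereal zii" .
  moreover have "\<forall>J. J \<subseteq> M1 \<longrightarrow> ell z J (M1 - J) \<ge> 0"
    using ell_restrict_nonneg[OF assms(1,2) _ nonneg] by blast
  ultimately show ?thesis
    unfolding Sigma_sys_def by blast
qed

theorem proposition6:
  fixes V :: "'a set" and E :: "'a set set" and Lminus Lplus :: "'a set"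
    and i :: 'a and M1 M2 :: "'a set" and z :: "'a set \<Rightarrow> real" and zii :: real
  assumes "graph_with_loops V E Lminus Lplus"
    and "i \<in> Lplus"
    and "M1 \<subset> M2" and "M2 \<subseteq> nbhd V E Lminus Lplus i" and "i \<in> M1"
    and "z {} = 1"
    and "Sigma_sys z zii i M2"
  shows "Sigma_sys z zii i M1"
proof -
  have "finite V"
    using assms(1) unfolding graph_with_loops_def by simp
  moreover have "M2 \<subseteq> V"
    using assms(4) unfolding nbhd_def by blast
  ultimately have "finite M2"
    by (rule finite_subset[rotated])
  then show ?thesis
    using psubset_imp_subset[OF assms(3)] assms(5,7) by (rule Sigma_sys_subset)
qed

end
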